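(* Let $X$ be a real Banach space and $Y$ a uniformly convex real Banach space. Let $f\in\mathrm{Lip}_0(X,Y)$ and let $T_f\colon\mathcal F(X)\to Y$ be its linearization. If $T_f$ attains its norm (i.e., $\|T_f(w)\|=\|T_f\|$ for some $w$ in the unit sphere of $\mathcal F(X)$), then $f\in\mathrm{A}(X,Y)$.
   Context: $\widetilde X=\{(x,y)\in X^2:x\neq y\}$. $\mathrm{Lip}_0(X,Y)$ is the Banach space of Lipschitz $f\colon X\to Y$ with $f(0)=0$ and norm $\|f\|=\sup_{(x,y)\in\widetilde X}\|f(x)-f(y)\|/\|x-y\|$. The Lipschitz-free space $\mathcal F(X)$ is the closed linear span of $\{\delta_x:x\in X\}$ in $\mathrm{Lip}_0(X,\mathbb R)^*$, where $\delta_x(g)=g(x)$. For $f\in\mathrm{Lip}_0(X,Y)$, $T_f$ is the unique bounded linear operator $\mathcal F(X)\to Y$ with $T_f(\delta_x)=f(x)$ for all $x$; it satisfies $\|T_f\|=\|f\|$. $\mathrm{A}(X,Y)$ is the set of $f\in\mathrm{Lip}_0(X,Y)$ for which there exist $z\in Y$ with $\|z\|=\|f\|$ and $(x_n,y_n)\in\widetilde X$ with $\frac{f(x_n)-f(y_n)}{\|x_n-y_n\|}\to z$. *)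

theory Defs
  imports "HOL-Analysis.Analysis"
begin

definition Lip0 :: "('a::real_normed_vector \<Rightarrow> 'b::real_normed_vector) set" where
  "Lip0 = {f. f 0 = 0 \<and> (\<exists>C. C-lipschitz_on UNIV f)}"

definition lipnorm :: "('a::real_normed_vector \<Rightarrow> 'b::real_normed_vector) \<Rightarrow> real" where
  "lipnorm f = Sup {norm (f x - f y) / norm (x - y) | x y. x \<noteq> y}"

text \<open>Functionals on Lip0(X,R) are represented as functions on 'a => real that vanish
  outside Lip0 (so they are determined by their action on Lip0).\<close>

definition evalf :: "'a::real_normed_vector \<Rightarrow> ('a \<Rightarrow> real) \<Rightarrow> real" ("\<delta>") where
  "\<delta> x = (\<lambda>g. if g \<in> Lip0 then g x else 0)"

definition lip_dual :: "'a::real_normed_vector itself \<Rightarrow> (('a \<Rightarrow> real) \<Rightarrow> real) set" where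
  "lip_dual _ = {\<phi>. (\<forall>g. g \<notin> Lip0 \<longrightarrow> \<phi> g = 0)
      \<and> (\<forall>g\<in>Lip0. \<forall>h\<in>Lip0. \<phi> (\<lambda>x. g x + h x) = \<phi> g + \<phi> h)
      \<and> (\<forall>g\<in>Lip0. \<forall>c. \<phi> (\<lambda>x. c * g x) = c * \<phi> g)
      \<and> (\<exists>C. \<forall>g\<in>Lip0. \<bar>\<phi> g\<bar> \<le> C * lipnorm g)}"

definition dnorm :: "(('a::real_normed_vector \<Rightarrow> real) \<Rightarrow> real) \<Rightarrow> real" where
  "dnorm \<phi> = Sup {\<bar>\<phi> g\<bar> | g. g \<in> Lip0 \<and> lipnorm g \<le> 1}"

definition delta_span :: "'a::real_normed_vector itself \<Rightarrow> (('a \<Rightarrow> real) \<Rightarrow> real) set" where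
  "delta_span _ = {(\<lambda>g. \<Sum>x\<in>S. c x * \<delta> x g) | S c. finite S}"

definition free_space :: "'a::real_normed_vector itself \<Rightarrow> (('a \<Rightarrow> real) \<Rightarrow> real) set" where
  "free_space A = {\<phi> \<in> lip_dual A. \<forall>e>0. \<exists>\<psi>\<in>delta_span A. dnorm (\<lambda>g. \<phi> g - \<psi> g) < e}"

definition is_linearization ::
  "('a::real_normed_vector \<Rightarrow> 'b::real_normed_vector) \<Rightarrow> ((('a \<Rightarrow> real) \<Rightarrow> real) \<Rightarrow> 'b) \<Rightarrow> bool" where
  "is_linearization f T \<longleftrightarrow>
     (\<forall>\<phi>\<in>free_space TYPE('a). \<forall>\<psi>\<in>free_space TYPE('a). T (\<lambda>g. \<phi> g + \<psi> g) = T \<phi> + T \<psi>)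
   \<and> (\<forall>\<phi>\<in>free_space TYPE('a). \<forall>c. T (\<lambda>g. c * \<phi> g) = c *\<^sub>R T \<phi>)
   \<and> (\<exists>C. \<forall>\<phi>\<in>free_space TYPE('a). norm (T \<phi>) \<le> C * dnorm \<phi>)
   \<and> (\<forall>x. T (\<delta> x) = f x)"

definition opnorm_free :: "((('a::real_normed_vector \<Rightarrow> real) \<Rightarrow> real) \<Rightarrow> 'b::real_normed_vector) \<Rightarrow> real" where
  "opnorm_free T = Sup {norm (T \<phi>) | \<phi>. \<phi> \<in> free_space TYPE('a) \<and> dnorm \<phi> \<le> 1}"

definition attains_norm_free :: "((('a::real_normed_vector \<Rightarrow> real) \<Rightarrow> real) \<Rightarrow> 'b::real_normed_vector) \<Rightarrow> bool" where
  "attains_norm_free T \<longleftrightarrow> (\<exists>w\<in>free_space TYPE('a). dnorm w = 1 \<and> norm (T w) = opnorm_free T)"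

definition uniformly_convex :: "'b::real_normed_vector itself \<Rightarrow> bool" where
  "uniformly_convex _ \<longleftrightarrow> (\<forall>e>0. \<exists>d>0. \<forall>x y::'b. norm x = 1 \<and> norm y = 1 \<and> norm (x - y) \<ge> e
       \<longrightarrow> norm ((1/2) *\<^sub>R (x + y)) \<le> 1 - d)"

definition classA :: "('a::real_normed_vector \<Rightarrow> 'b::real_normed_vector) set" where
  "classA = {f \<in> Lip0. \<exists>z xs ys. norm z = lipnorm f \<and> (\<forall>n. xs n \<noteq> ys n)
      \<and> (\<lambda>n. (1 / norm (xs n - ys n)) *\<^sub>R (f (xs n) - f (ys n))) \<longlonglongrightarrow> z}"

end

theory Submission
  imports Defs
begin

text \<open>
  Let \<open>w\<close> be a norming element of the free space and \<open>y = T w\<close>. Approximate \<open>w\<close> by a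
  finite combination \<open>\<Sum>x\<in>S. c x \<delta>\<^sub>x\<close> and test \<open>y\<close> against a functional \<open>\<phi>\<close> with
  \<open>\<phi> y = \<parallel>y\<parallel>\<close> that has norm at most one on the finite-dimensional span of \<open>y\<close> and \<open>f ` S\<close>.
  Then \<open>\<parallel>y\<parallel>\<close> is almost \<open>\<Sum>x\<in>S. c x \<phi> (f x)\<close>, and by McShane's extension theorem this is at
  most \<open>M\<close> times the dual norm of the combination whenever \<open>\<phi> \<circ> f\<close> is \<open>M\<close>-Lipschitz on
  \<open>S \<union> {0}\<close>. This holds with \<open>M = lipnorm f\<close>; testing \<open>T\<close> on the molecules
  \<open>(\<delta>\<^sub>a - \<delta>\<^sub>b) / \<parallel>a - b\<parallel>\<close> gives the reverse bound, so \<open>\<parallel>y\<parallel> = lipnorm f\<close>.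
  If the difference quotients \<open>q\<close> of \<open>f\<close> stayed \<open>\<epsilon>\<close>-away from \<open>y\<close>, uniform convexity would
  give \<open>\<parallel>q + y\<parallel> \<le> 2 lipnorm f - \<gamma>\<close>, hence \<open>\<phi> q \<le> lipnorm f - \<gamma>\<close>, and the same argument
  with \<open>M = lipnorm f - \<gamma>\<close> would give \<open>\<parallel>y\<parallel> < lipnorm f\<close>. So \<open>y\<close> is a limit of difference
  quotients.
\<close>

section \<open>Dominated extension of functionals from finite-dimensional subspaces\<close>

lemma linear_functional_vanishing_on_span:
  fixes u :: "'a::real_vector"
  assumes "u \<notin> span B"
  obtains \<psi> :: "'a \<Rightarrow> real" where "linear \<psi>" "\<And>x. x \<in> span B \<Longrightarrow> \<psi> x = 0" "\<psi> u = 1"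
proof -
  obtain B0 where B0: "B0 \<subseteq> span B" "independent B0" "span B \<subseteq> span B0"
    using maximal_independent_subset[of "span B"] by blast
  have "span B0 \<subseteq> span B"
    using B0(1) by (simp add: span_minimal)
  with assms have u: "u \<notin> span B0"
    by blast
  then have "independent (insert u B0)"
    using B0(2) span_base[of u B0] by (auto simp: independent_insert)
  then obtain \<psi> :: "'a \<Rightarrow> real" where \<psi>: "linear \<psi>" "\<forall>x\<in>insert u B0. \<psi> x = (if x = u then 1 else 0)"
    using linear_independent_extend[of "insert u B0" "\<lambda>x. if x = u then 1 else 0"] by blast
  have "\<psi> x = 0" if "x \<in> B0" for x
  proof -
    have "x \<noteq> u"
      using that u span_base by blast
    then show ?thesis
      using \<psi>(2) that by simp
  qed
  then have "\<psi> x = 0" if "x \<in> span B" for x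
    using linear_eq_0_on_span[OF \<psi>(1)] B0(3) that by blast
  moreover have "\<psi> u = 1"
    using \<psi>(2) by simp
  ultimately show ?thesis
    using \<psi>(1) that by blast
qed

lemma dominated_extension_inequality:
  fixes \<phi> :: "'a::real_normed_vector \<Rightarrow> real"
  assumes lin: "linear \<phi>" and dom: "\<And>a. a \<in> span B \<Longrightarrow> \<phi> a \<le> norm a"
    and c_lower: "\<And>w. w \<in> span B \<Longrightarrow> \<phi> w - norm (w - u) \<le> c"
    and c_upper: "\<And>w. w \<in> span B \<Longrightarrow> c \<le> norm (w + u) - \<phi> w"
    and w: "w \<in> span B"
  shows "\<phi> w + k * c \<le> norm (w + k *\<^sub>R u)"
proof (cases k "0::real" rule: linorder_cases)
  case less
  define s where "s = - k"
  have s: "s > 0"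
    using less by (simp add: s_def)
  have "(\<phi> w - norm (w + k *\<^sub>R u)) / s = \<phi> ((1 / s) *\<^sub>R w) - norm ((1 / s) *\<^sub>R w - u)"
  proof -
    have "(1 / s) *\<^sub>R w - u = (1 / s) *\<^sub>R (w + k *\<^sub>R u)"
      using s by (simp add: s_def algebra_simps)
    then show ?thesis
      using s by (simp add: linear_scale[OF lin] diff_divide_distrib)
  qed
  also have "\<dots> \<le> c"
    using c_lower span_scale w by blast
  finally have "\<phi> w - norm (w + k *\<^sub>R u) \<le> c * s"
    using s by (simp add: pos_divide_le_eq)
  then show ?thesis
    by (simp add: s_def algebra_simps)
next
  case equal
  then show ?thesis
    using dom w by simp
next
  case greater
  have "(norm (w + k *\<^sub>R u) - \<phi> w) / k = norm ((1 / k) *\<^sub>R w + u) - \<phi> ((1 / k) *\<^sub>R w)"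
  proof -
    have "(1 / k) *\<^sub>R w + u = (1 / k) *\<^sub>R (w + k *\<^sub>R u)"
      using greater by (simp add: algebra_simps)
    then show ?thesis
      using greater by (simp add: linear_scale[OF lin] diff_divide_distrib)
  qed
  also have "\<dots> \<ge> c"
    using c_upper span_scale w by blast
  finally have "c * k \<le> norm (w + k *\<^sub>R u) - \<phi> w"
    using greater by (simp add: pos_le_divide_eq)
  then show ?thesis
    by (simp add: algebra_simps)
qed

lemma dominated_extension_step:
  fixes \<phi> :: "'a::real_normed_vector \<Rightarrow> real"
  assumes lin: "linear \<phi>" and dom: "\<And>a. a \<in> span B \<Longrightarrow> \<phi> a \<le> norm a"
  obtains \<phi>' where "linear \<phi>'" "\<And>a. a \<in> span (insert u B) \<Longrightarrow> \<phi>' a \<le> norm a"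
    "\<And>a. a \<in> span B \<Longrightarrow> \<phi>' a = \<phi> a"
proof (cases "u \<in> span B")
  case True
  then show ?thesis
    using that[of \<phi>] lin dom by (simp add: span_redundant)
next
  case False
  then obtain \<psi> :: "'a \<Rightarrow> real" where \<psi>: "linear \<psi>" "\<And>x. x \<in> span B \<Longrightarrow> \<psi> x = 0" "\<psi> u = 1"
    by (metis linear_functional_vanishing_on_span)
  have gap: "\<phi> w1 - norm (w1 - u) \<le> norm (w2 + u) - \<phi> w2" if "w1 \<in> span B" "w2 \<in> span B" for w1 w2
  proof -
    have "\<phi> w1 + \<phi> w2 \<le> norm (w1 + w2)"
      using dom[of "w1 + w2"] that by (simp add: linear_add[OF lin] span_add)
    also have "\<dots> \<le> norm (w1 - u) + norm (w2 + u)"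
      using norm_triangle_ineq[of "w1 - u" "w2 + u"] by simp
    finally show ?thesis
      by simp
  qed
  define c where "c = Sup ((\<lambda>w. \<phi> w - norm (w - u)) ` span B)"
  have c_lower: "\<phi> w - norm (w - u) \<le> c" if "w \<in> span B" for w
  proof -
    have "bdd_above ((\<lambda>w. \<phi> w - norm (w - u)) ` span B)"
      using gap[OF _ span_zero] by (intro bdd_aboveI2) simp
    then show ?thesis
      unfolding c_def using that by (intro cSup_upper imageI)
  qed
  have c_upper: "c \<le> norm (w + u) - \<phi> w" if "w \<in> span B" for w
    unfolding c_def using gap[OF _ that] span_zero by (intro cSUP_least) auto
  define \<phi>' where "\<phi>' x = \<phi> x + (c - \<phi> u) * \<psi> x" for x
  have lin': "linear \<phi>'"
    unfolding \<phi>'_def using linear_compose_add[OF lin linear_compose_scale_right[OF \<psi>(1)]] by simp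
  have agree: "\<phi>' a = \<phi> a" if "a \<in> span B" for a
    using \<psi>(2)[OF that] by (simp add: \<phi>'_def)
  have "\<phi>' a \<le> norm a" if a: "a \<in> span (insert u B)" for a
  proof -
    obtain k where "a - k *\<^sub>R u \<in> span B"
      using a span_breakdown_eq by blast
    moreover define w where "w = a - k *\<^sub>R u"
    ultimately have w: "w \<in> span B"
      by simp
    have "\<phi>' a = \<phi> w + k * c"
      using agree[OF w] \<psi>(3) linear_add[OF lin', of w "k *\<^sub>R u"] linear_scale[OF lin', of k u]
      by (simp add: w_def \<phi>'_def)
    also have "\<dots> \<le> norm (w + k *\<^sub>R u)"
      using lin dom c_lower c_upper w by (rule dominated_extension_inequality)
    finally show ?thesis
      by (simp add: w_def)
  qed
  with lin' agree show ?thesis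
    using that by blast
qed

lemma norming_functional_on_line:
  fixes y :: "'a::real_normed_vector"
  obtains \<phi> :: "'a \<Rightarrow> real" where "linear \<phi>" "\<And>a. a \<in> span {y} \<Longrightarrow> \<phi> a \<le> norm a" "\<phi> y = norm y"
proof (cases "y = 0")
  case True
  then show ?thesis
    using that[of "\<lambda>_. 0"] by (simp add: linear_zero)
next
  case False
  then obtain \<psi> :: "'a \<Rightarrow> real" where \<psi>: "linear \<psi>" "\<psi> y = 1"
    using linear_functional_vanishing_on_span[of y "{}"] by auto
  have "norm y * \<psi> a \<le> norm a" if a: "a \<in> span {y}" for a
  proof -
    obtain k where k: "a = k *\<^sub>R y"
      using a by (auto simp: span_singleton)
    then have "norm y * \<psi> a = k * norm y"
      using \<psi> by (simp add: linear_scale)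
    also have "\<dots> \<le> norm a"
      using k by (simp add: mult_right_mono)
    finally show ?thesis .
  qed
  moreover have "linear (\<lambda>a. norm y * \<psi> a)"
    using linear_compose_scale_right[OF \<psi>(1), of "norm y"] by simp
  ultimately show ?thesis
    using that[of "\<lambda>a. norm y * \<psi> a"] \<psi>(2) by simp
qed

lemma norming_functional_on_finite_span:
  fixes y :: "'a::real_normed_vector"
  assumes "finite U"
  obtains \<phi> :: "'a \<Rightarrow> real"
  where "linear \<phi>" "\<And>a. a \<in> span (insert y U) \<Longrightarrow> \<phi> a \<le> norm a" "\<phi> y = norm y"
proof -
  have "\<exists>\<phi> :: 'a \<Rightarrow> real. linear \<phi> \<and> (\<forall>a\<in>span (insert y U). \<phi> a \<le> norm a) \<and> \<phi> y = norm y"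
    using assms
  proof (induction U rule: finite_induct)
    case empty
    obtain \<phi> :: "'a \<Rightarrow> real" where "linear \<phi>" "\<And>a. a \<in> span {y} \<Longrightarrow> \<phi> a \<le> norm a" "\<phi> y = norm y"
      using norming_functional_on_line[of y] by blast
    then show ?case
      by (intro exI[of _ \<phi>]) simp
  next
    case (insert u U)
    then obtain \<phi> :: "'a \<Rightarrow> real" where
      \<phi>: "linear \<phi>" "\<And>a. a \<in> span (insert y U) \<Longrightarrow> \<phi> a \<le> norm a" "\<phi> y = norm y"
      by blast
    obtain \<phi>' where \<phi>': "linear \<phi>'" "\<And>a. a \<in> span (insert u (insert y U)) \<Longrightarrow> \<phi>' a \<le> norm a"
      "\<And>a. a \<in> span (insert y U) \<Longrightarrow> \<phi>' a = \<phi> a"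
      using dominated_extension_step[OF \<phi>(1,2)] by blast
    have "\<phi>' y = norm y"
      using \<phi>'(3)[OF span_base] \<phi>(3) by simp
    with \<phi>' show ?case
      by (intro exI[of _ \<phi>']) (simp add: insert_commute)
  qed
  then show ?thesis
    using that by blast
qed

lemma norming_functional_sum_ge:
  fixes v :: "'i \<Rightarrow> 'a::real_normed_vector" and \<phi> :: "'a \<Rightarrow> real"
  assumes "linear \<phi>" "\<And>a. a \<in> span (insert y (v ` S)) \<Longrightarrow> \<phi> a \<le> norm a" "\<phi> y = norm y"
  shows "norm y - norm (y - (\<Sum>x\<in>S. c x *\<^sub>R v x)) \<le> (\<Sum>x\<in>S. c x * \<phi> (v x))"
proof -
  have "(\<Sum>x\<in>S. c x *\<^sub>R v x) \<in> span (insert y (v ` S))"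
    by (intro span_sum span_scale span_base) auto
  then have "y - (\<Sum>x\<in>S. c x *\<^sub>R v x) \<in> span (insert y (v ` S))"
    by (simp add: span_base span_diff)
  then have "\<phi> (y - (\<Sum>x\<in>S. c x *\<^sub>R v x)) \<le> norm (y - (\<Sum>x\<in>S. c x *\<^sub>R v x))"
    by (rule assms(2))
  moreover have "\<phi> (y - (\<Sum>x\<in>S. c x *\<^sub>R v x)) = norm y - (\<Sum>x\<in>S. c x * \<phi> (v x))"
    using assms(1,3) by (simp add: linear_diff linear_sum linear_scale)
  ultimately show ?thesis
    by simp
qed

section \<open>McShane extension from a finite set\<close>

lemma mcshane_extension_finite:
  fixes h :: "'a::metric_space \<Rightarrow> real"
  assumes P: "finite P" "P \<noteq> {}" and h: "K-lipschitz_on P h"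
  obtains g where "K-lipschitz_on UNIV g" "\<And>p. p \<in> P \<Longrightarrow> g p = h p"
proof
  define g where "g x = Min ((\<lambda>s. h s + K * dist x s) ` P)" for x
  have K: "0 \<le> K"
    using h by (rule lipschitz_on_nonneg)
  have g_le: "g x \<le> h s + K * dist x s" if "s \<in> P" for x s
    unfolding g_def using P that by (intro Min_le) auto
  have g_attained: "\<exists>s\<in>P. g x = h s + K * dist x s" for x
  proof -
    have "g x \<in> (\<lambda>s. h s + K * dist x s) ` P"
      unfolding g_def using P by (intro Min_in) auto
    then show ?thesis
      by blast
  qed
  show "g p = h p" if p: "p \<in> P" for p
  proof -
    obtain s where s: "s \<in> P" "g p = h s + K * dist p s"
      using g_attained by blast
    have "h p - h s \<le> K * dist p s"
      using lipschitz_onD[OF h p s(1)] by (simp add: dist_real_def)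
    then show ?thesis
      using g_le[OF p, of p] s(2) by simp
  qed
  have one_sided: "g x - g y \<le> K * dist x y" for x y
  proof -
    obtain s where s: "s \<in> P" "g y = h s + K * dist y s"
      using g_attained by blast
    have "K * dist x s \<le> K * dist x y + K * dist y s"
      using K dist_triangle[of x s y] by (simp add: distrib_left[symmetric] mult_left_mono)
    then show ?thesis
      using g_le[OF s(1), of x] s(2) by simp
  qed
  show "K-lipschitz_on UNIV g"
  proof (rule lipschitz_onI[OF _ K])
    fix x y
    show "dist (g x) (g y) \<le> K * dist x y"
      using one_sided[of x y] one_sided[of y x] by (simp add: dist_real_def dist_commute abs_le_iff)
  qed
qed

lemma bdd_above_difference_quotients:
  assumes "f \<in> Lip0"
  shows "bdd_above {norm (f x - f y) / norm (x - y) | x y. x \<noteq> y}"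
proof -
  obtain C where C: "C-lipschitz_on UNIV f"
    using assms unfolding Lip0_def by blast
  have "norm (f x - f y) / norm (x - y) \<le> C" if "x \<noteq> y" for x y
    using lipschitz_on_normD[OF C] that by (simp add: divide_le_eq)
  then show ?thesis
    unfolding bdd_above_def by blast
qed

lemma norm_diff_le_lipnorm:
  assumes "f \<in> Lip0"
  shows "norm (f x - f y) \<le> lipnorm f * norm (x - y)"
proof (cases "x = y")
  case False
  have "norm (f x - f y) / norm (x - y) \<le> lipnorm f"
    unfolding lipnorm_def using False
    by (intro cSup_upper[OF _ bdd_above_difference_quotients[OF assms]]) blast
  then show ?thesis
    using False by (simp add: divide_le_eq mult.commute)
qed simp

text \<open>
  On the space \<open>{0}\<close> there are no pairs of distinct points and \<open>lipnorm\<close> is the unspecified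
  value \<open>Sup {}\<close>; this is why most lemmas below assume a point \<open>a \<noteq> 0\<close>.
\<close>

lemma lipnorm_le:
  fixes f :: "'a::real_normed_vector \<Rightarrow> 'b::real_normed_vector"
  assumes "\<exists>a::'a. a \<noteq> 0" and "\<And>x y. x \<noteq> y \<Longrightarrow> norm (f x - f y) \<le> K * norm (x - y)"
  shows "lipnorm f \<le> K"
  unfolding lipnorm_def
proof (rule cSup_least)
  show "{norm (f x - f y) / norm (x - y) | x y. x \<noteq> y} \<noteq> {}"
    using assms(1) by blast
next
  fix r
  assume "r \<in> {norm (f x - f y) / norm (x - y) | x y. x \<noteq> y}"
  then obtain x y where "x \<noteq> y" "r = norm (f x - f y) / norm (x - y)"
    by blast
  then show "r \<le> K"
    using assms(2)[of x y] by (simp add: divide_le_eq mult.commute)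
qed

lemma lipnorm_nonneg:
  fixes f :: "'a::real_normed_vector \<Rightarrow> 'b::real_normed_vector"
  assumes "\<exists>a::'a. a \<noteq> 0" and "f \<in> Lip0"
  shows "0 \<le> lipnorm f"
proof -
  obtain a :: 'a where "a \<noteq> 0"
    using assms(1) by blast
  then have "norm (f a - f 0) / norm (a - 0) \<in> {norm (f x - f y) / norm (x - y) | x y. x \<noteq> y}"
    by blast
  then have "norm (f a - f 0) / norm (a - 0) \<le> lipnorm f"
    unfolding lipnorm_def by (rule cSup_upper[OF _ bdd_above_difference_quotients[OF assms(2)]])
  moreover have "0 \<le> norm (f a - f 0) / norm (a - 0)"
    by simp
  ultimately show ?thesis
    by linarith
qed

lemma Lip0_add: "g \<in> Lip0 \<Longrightarrow> h \<in> Lip0 \<Longrightarrow> (\<lambda>x. g x + h x) \<in> Lip0"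
  unfolding Lip0_def using lipschitz_on_add by fastforce

lemma Lip0_scale: "g \<in> Lip0 \<Longrightarrow> (\<lambda>x. c * (g x :: real)) \<in> Lip0"
  unfolding Lip0_def using lipschitz_on_cmult_real by fastforce

lemma Lip0_zero: "(\<lambda>x::'a::real_normed_vector. 0::'b::real_normed_vector) \<in> Lip0"
  unfolding Lip0_def using lipschitz_on_constant by blast

lemma lipnorm_zero:
  assumes "\<exists>a::'a. a \<noteq> 0"
  shows "lipnorm (\<lambda>x::'a::real_normed_vector. 0::'b::real_normed_vector) = 0"
  using lipnorm_le[OF assms, of "\<lambda>x. 0::'b" 0] lipnorm_nonneg[OF assms Lip0_zero[where 'b='b]]
  by simp

lemma lip_dual_zero:
  assumes "\<phi> \<in> lip_dual TYPE('a::real_normed_vector)"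
  shows "\<phi> (\<lambda>x::'a. 0) = 0"
proof -
  have "\<forall>g\<in>Lip0. \<forall>c. \<phi> (\<lambda>x. c * g x) = c * \<phi> g"
    using assms unfolding lip_dual_def by blast
  from this[rule_format, OF Lip0_zero, of 0] show ?thesis
    by simp
qed

lemma bdd_above_lip_dual:
  assumes nontrivial: "\<exists>a::'a. a \<noteq> 0" and "\<phi> \<in> lip_dual TYPE('a::real_normed_vector)"
  shows "bdd_above {\<bar>\<phi> g\<bar> | g. g \<in> Lip0 \<and> lipnorm (g :: 'a \<Rightarrow> real) \<le> 1}"
proof -
  obtain C where C: "\<forall>g\<in>Lip0. \<bar>\<phi> g\<bar> \<le> C * lipnorm (g :: 'a \<Rightarrow> real)"
    using assms(2) unfolding lip_dual_def by blast
  have "\<bar>\<phi> g\<bar> \<le> \<bar>C\<bar>" if "g \<in> Lip0" "lipnorm g \<le> 1" for g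
  proof -
    have "\<bar>\<phi> g\<bar> \<le> C * lipnorm g"
      using C that(1) by blast
    also have "\<dots> \<le> \<bar>C\<bar> * lipnorm g"
      using lipnorm_nonneg[OF nontrivial that(1)] by (simp add: mult_right_mono)
    also have "\<dots> \<le> \<bar>C\<bar>"
      using that(2) by (simp add: mult_left_le)
    finally show ?thesis .
  qed
  then show ?thesis
    unfolding bdd_above_def by blast
qed

lemma abs_le_dnorm:
  assumes "\<exists>a::'a. a \<noteq> 0" and "\<phi> \<in> lip_dual TYPE('a::real_normed_vector)"
    and "g \<in> Lip0" "lipnorm (g :: 'a \<Rightarrow> real) \<le> 1"
  shows "\<bar>\<phi> g\<bar> \<le> dnorm \<phi>"
  unfolding dnorm_def using assms(3,4) by (intro cSup_upper[OF _ bdd_above_lip_dual[OF assms(1,2)]]) blast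

lemma dnorm_le:
  fixes \<phi> :: "('a::real_normed_vector \<Rightarrow> real) \<Rightarrow> real"
  assumes "\<exists>a::'a. a \<noteq> 0" and "\<And>g. g \<in> Lip0 \<Longrightarrow> lipnorm (g :: 'a \<Rightarrow> real) \<le> 1 \<Longrightarrow> \<bar>\<phi> g\<bar> \<le> B"
  shows "dnorm \<phi> \<le> B"
  unfolding dnorm_def
proof (rule cSup_least)
  show "{\<bar>\<phi> g\<bar> |g. g \<in> Lip0 \<and> lipnorm g \<le> 1} \<noteq> {}"
    using Lip0_zero[where 'a='a and 'b=real] lipnorm_zero[OF assms(1), where 'b=real] by fastforce
qed (use assms(2) in blast)

lemma dnorm_nonneg:
  assumes "\<exists>a::'a. a \<noteq> 0" and "\<phi> \<in> lip_dual TYPE('a::real_normed_vector)"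
  shows "0 \<le> dnorm \<phi>"
  using abs_le_dnorm[OF assms Lip0_zero[where 'b=real]] lipnorm_zero[OF assms(1), where 'b=real]
    lip_dual_zero[OF assms(2)]
  by simp

lemma abs_le_dnorm_lipnorm:
  assumes nontrivial: "\<exists>a::'a. a \<noteq> 0" and \<phi>: "\<phi> \<in> lip_dual TYPE('a::real_normed_vector)"
    and g: "g \<in> Lip0"
  shows "\<bar>\<phi> g\<bar> \<le> dnorm \<phi> * lipnorm (g :: 'a \<Rightarrow> real)"
proof (cases "lipnorm g = 0")
  case True
  have "g = (\<lambda>x. 0)"
  proof
    fix x
    show "g x = 0"
      using norm_diff_le_lipnorm[OF g, of x 0] g True by (simp add: Lip0_def)
  qed
  then show ?thesis
    using lip_dual_zero[OF \<phi>] True by simp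
next
  case False
  define l where "l = lipnorm g"
  have l: "l > 0"
    using False lipnorm_nonneg[OF nontrivial g] by (simp add: l_def)
  have scaled: "(\<lambda>x. (1 / l) * g x) \<in> Lip0"
    using Lip0_scale[OF g] .
  have "lipnorm (\<lambda>x. (1 / l) * g x) \<le> 1"
  proof (rule lipnorm_le[OF nontrivial])
    fix x y :: 'a
    have "norm ((1 / l) * g x - (1 / l) * g y) = norm (g x - g y) / l"
      using l by (simp add: diff_divide_distrib[symmetric] abs_divide)
    also have "\<dots> \<le> 1 * norm (x - y)"
      using norm_diff_le_lipnorm[OF g, of x y] l by (simp add: l_def divide_le_eq mult.commute)
    finally show "norm ((1 / l) * g x - (1 / l) * g y) \<le> 1 * norm (x - y)" .
  qed
  then have "\<bar>\<phi> (\<lambda>x. (1 / l) * g x)\<bar> \<le> dnorm \<phi>"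
    by (rule abs_le_dnorm[OF nontrivial \<phi> scaled])
  moreover have "\<phi> (\<lambda>x. (1 / l) * g x) = (1 / l) * \<phi> g"
    using \<phi> g unfolding lip_dual_def by blast
  ultimately show ?thesis
    using l by (simp add: l_def abs_divide divide_le_eq)
qed

lemma lip_dual_diff:
  assumes "\<phi> \<in> lip_dual TYPE('a::real_normed_vector)" "\<psi> \<in> lip_dual TYPE('a)"
  shows "(\<lambda>g. \<phi> g - \<psi> g) \<in> lip_dual TYPE('a)"
proof -
  obtain C1 where C1: "\<forall>g\<in>Lip0. \<bar>\<phi> g\<bar> \<le> C1 * lipnorm (g :: 'a \<Rightarrow> real)"
    using assms(1) unfolding lip_dual_def by blast
  obtain C2 where C2: "\<forall>g\<in>Lip0. \<bar>\<psi> g\<bar> \<le> C2 * lipnorm (g :: 'a \<Rightarrow> real)"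
    using assms(2) unfolding lip_dual_def by blast
  have "\<bar>\<phi> g - \<psi> g\<bar> \<le> (C1 + C2) * lipnorm g" if "g \<in> Lip0" for g
  proof -
    have "\<bar>\<phi> g - \<psi> g\<bar> \<le> \<bar>\<phi> g\<bar> + \<bar>\<psi> g\<bar>"
      by (rule abs_triangle_ineq4)
    also have "\<dots> \<le> C1 * lipnorm g + C2 * lipnorm g"
      using C1 C2 that by (intro add_mono) auto
    finally show ?thesis
      by (simp add: distrib_right)
  qed
  then have "\<exists>C. \<forall>g\<in>Lip0. \<bar>\<phi> g - \<psi> g\<bar> \<le> C * lipnorm g"
    by blast
  moreover have "\<forall>g. g \<notin> Lip0 \<longrightarrow> \<phi> g - \<psi> g = 0"
    using assms unfolding lip_dual_def by simp
  moreover have "\<forall>g\<in>Lip0. \<forall>h\<in>Lip0. \<phi> (\<lambda>x. g x + h x) - \<psi> (\<lambda>x. g x + h x) = (\<phi> g - \<psi> g) + (\<phi> h - \<psi> h)"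
    using assms unfolding lip_dual_def by simp
  moreover have "\<forall>g\<in>Lip0. \<forall>c. \<phi> (\<lambda>x. c * g x) - \<psi> (\<lambda>x. c * g x) = c * (\<phi> g - \<psi> g)"
    using assms unfolding lip_dual_def by (simp add: right_diff_distrib)
  ultimately show ?thesis
    unfolding lip_dual_def by (intro CollectI conjI)
qed

lemma dnorm_diff_le:
  assumes "\<exists>a::'a. a \<noteq> 0"
    and "\<phi> \<in> lip_dual TYPE('a::real_normed_vector)" "\<psi> \<in> lip_dual TYPE('a)"
  shows "dnorm (\<lambda>g. \<phi> g - \<psi> g) \<le> dnorm \<phi> + dnorm \<psi>"
proof (rule dnorm_le[OF assms(1)])
  fix g :: "'a \<Rightarrow> real"
  assume "g \<in> Lip0" "lipnorm g \<le> 1"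
  then show "\<bar>\<phi> g - \<psi> g\<bar> \<le> dnorm \<phi> + dnorm \<psi>"
    using abs_le_dnorm[OF assms(1,2)] abs_le_dnorm[OF assms(1,3)]
    by (intro order_trans[OF abs_triangle_ineq4] add_mono) auto
qed

definition delta_comb :: "'a set \<Rightarrow> ('a \<Rightarrow> real) \<Rightarrow> ('a::real_normed_vector \<Rightarrow> real) \<Rightarrow> real" where
  "delta_comb S c = (\<lambda>g. \<Sum>x\<in>S. c x * \<delta> x g)"

lemma delta_span_eq: "delta_span TYPE('a::real_normed_vector) = {delta_comb S c | S c. finite S}"
  unfolding delta_span_def delta_comb_def by blast

lemma delta_span_diff:
  assumes "\<psi>\<^sub>1 \<in> delta_span TYPE('a::real_normed_vector)" "\<psi>\<^sub>2 \<in> delta_span TYPE('a)"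
  shows "(\<lambda>g. \<psi>\<^sub>1 g - \<psi>\<^sub>2 g) \<in> delta_span TYPE('a)"
proof -
  obtain S1 c1 S2 c2 where S: "finite S1" "finite S2" "\<psi>\<^sub>1 = delta_comb S1 c1" "\<psi>\<^sub>2 = delta_comb S2 c2"
    using assms unfolding delta_span_eq by blast
  define c where "c x = (if x \<in> S1 then c1 x else 0) - (if x \<in> S2 then c2 x else 0)" for x
  have "(\<Sum>x\<in>S1 \<union> S2. (if x \<in> S1 then c1 x else 0) * \<delta> x g) = delta_comb S1 c1 g" for g
    unfolding delta_comb_def using S by (intro sum.mono_neutral_cong_right) auto
  moreover have "(\<Sum>x\<in>S1 \<union> S2. (if x \<in> S2 then c2 x else 0) * \<delta> x g) = delta_comb S2 c2 g" for g
    unfolding delta_comb_def using S by (intro sum.mono_neutral_cong_right) auto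
  ultimately have "(\<lambda>g. \<psi>\<^sub>1 g - \<psi>\<^sub>2 g) = delta_comb (S1 \<union> S2) c"
    unfolding S(3,4) by (auto simp: delta_comb_def c_def left_diff_distrib sum_subtractf)
  then show ?thesis
    using S(1,2) unfolding delta_span_eq by blast
qed

lemma delta_comb_lip_dual: "delta_comb S c \<in> lip_dual TYPE('a::real_normed_vector)"
  unfolding lip_dual_def
proof (intro CollectI conjI ballI allI impI)
  fix g :: "'a \<Rightarrow> real"
  assume "g \<notin> Lip0"
  then show "delta_comb S c g = 0"
    by (simp add: delta_comb_def evalf_def)
next
  fix g h :: "'a \<Rightarrow> real"
  assume "g \<in> Lip0" "h \<in> Lip0"
  then show "delta_comb S c (\<lambda>x. g x + h x) = delta_comb S c g + delta_comb S c h"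
    using Lip0_add[of g h] by (simp add: delta_comb_def evalf_def sum.distrib distrib_left)
next
  fix g :: "'a \<Rightarrow> real" and r
  assume "g \<in> Lip0"
  then show "delta_comb S c (\<lambda>x. r * g x) = r * delta_comb S c g"
    using Lip0_scale[of g r] by (simp add: delta_comb_def evalf_def sum_distrib_left algebra_simps)
next
  have "\<bar>delta_comb S c g\<bar> \<le> (\<Sum>x\<in>S. \<bar>c x\<bar> * norm x) * lipnorm g" if g: "g \<in> Lip0" for g :: "'a \<Rightarrow> real"
  proof -
    have "\<bar>delta_comb S c g\<bar> \<le> (\<Sum>x\<in>S. \<bar>c x\<bar> * \<bar>g x - g 0\<bar>)"
      using g by (simp add: delta_comb_def evalf_def Lip0_def sum_abs[THEN order_trans] abs_mult)
    also have "\<dots> \<le> (\<Sum>x\<in>S. \<bar>c x\<bar> * (lipnorm g * norm x))"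
      using norm_diff_le_lipnorm[OF g, of _ 0] by (intro sum_mono mult_left_mono) auto
    finally show ?thesis
      by (simp add: sum_distrib_left sum_distrib_right mult_ac)
  qed
  then show "\<exists>C. \<forall>g\<in>Lip0. \<bar>delta_comb S c g\<bar> \<le> C * lipnorm g"
    by blast
qed

lemma dnorm_zero:
  assumes "\<exists>a::'a. a \<noteq> 0"
  shows "dnorm (\<lambda>g::'a::real_normed_vector \<Rightarrow> real. 0) = 0"
proof -
  have "dnorm (\<lambda>g::'a \<Rightarrow> real. 0) \<le> 0"
    by (rule dnorm_le[OF assms]) simp
  moreover have "(\<lambda>g::'a \<Rightarrow> real. 0) = delta_comb {} (\<lambda>_. 0)"
    by (simp add: delta_comb_def)
  then have "0 \<le> dnorm (\<lambda>g::'a \<Rightarrow> real. 0)"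
    using dnorm_nonneg[OF assms delta_comb_lip_dual] by metis
  ultimately show ?thesis
    by linarith
qed

lemma delta_comb_free_space:
  assumes "\<exists>a::'a. a \<noteq> 0" and "finite S"
  shows "delta_comb S c \<in> free_space TYPE('a::real_normed_vector)"
proof -
  have "delta_comb S c \<in> delta_span TYPE('a)"
    using assms(2) unfolding delta_span_eq by blast
  moreover have "dnorm (\<lambda>g. delta_comb S c g - delta_comb S c g) = 0"
    using dnorm_zero[OF assms(1)] by simp
  ultimately show ?thesis
    unfolding free_space_def using delta_comb_lip_dual
    by (intro CollectI conjI allI impI bexI[of _ "delta_comb S c"]) auto
qed

lemma free_space_diff_delta_comb:
  assumes nontrivial: "\<exists>a::'a. a \<noteq> 0" and w: "w \<in> free_space TYPE('a::real_normed_vector)"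
    and S: "finite S"
  shows "(\<lambda>g. w g - delta_comb S c g) \<in> free_space TYPE('a)"
  unfolding free_space_def
proof (intro CollectI conjI allI impI)
  show "(\<lambda>g. w g - delta_comb S c g) \<in> lip_dual TYPE('a)"
    using w delta_comb_lip_dual unfolding free_space_def by (intro lip_dual_diff) auto
next
  fix e :: real
  assume "e > 0"
  then obtain \<psi> where \<psi>: "\<psi> \<in> delta_span TYPE('a)" "dnorm (\<lambda>g. w g - \<psi> g) < e"
    using w unfolding free_space_def by blast
  have "(\<lambda>g. \<psi> g - delta_comb S c g) \<in> delta_span TYPE('a)"
    using \<psi>(1) S by (intro delta_span_diff) (auto simp: delta_span_eq)
  moreover have "(\<lambda>g. w g - delta_comb S c g - (\<psi> g - delta_comb S c g)) = (\<lambda>g. w g - \<psi> g)"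
    by simp
  ultimately show "\<exists>\<psi>\<in>delta_span TYPE('a). dnorm (\<lambda>g. w g - delta_comb S c g - \<psi> g) < e"
    using \<psi>(2) by metis
qed

lemma delta_comb_le_lipschitz:
  fixes h :: "'a::real_normed_vector \<Rightarrow> real"
  assumes nontrivial: "\<exists>a::'a. a \<noteq> 0" and S: "finite S"
    and h: "K-lipschitz_on (insert 0 S) h" "h 0 = 0"
  shows "(\<Sum>x\<in>S. c x * h x) \<le> K * dnorm (delta_comb S c)"
proof -
  obtain g where g: "K-lipschitz_on UNIV g" "\<And>p. p \<in> insert 0 S \<Longrightarrow> g p = h p"
    using mcshane_extension_finite[of "insert 0 S" K h] S h(1) by blast
  have g_Lip0: "g \<in> Lip0"
    unfolding Lip0_def using g h(2) by auto
  have "lipnorm g \<le> K"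
    using lipschitz_on_normD[OF g(1)] by (intro lipnorm_le[OF nontrivial]) simp
  have "(\<Sum>x\<in>S. c x * h x) = delta_comb S c g"
    using g(2) g_Lip0 by (simp add: delta_comb_def evalf_def)
  also have "\<dots> \<le> dnorm (delta_comb S c) * lipnorm g"
    using abs_le_dnorm_lipnorm[OF nontrivial delta_comb_lip_dual g_Lip0, of S c] by simp
  also have "\<dots> \<le> dnorm (delta_comb S c) * K"
    using \<open>lipnorm g \<le> K\<close> dnorm_nonneg[OF nontrivial delta_comb_lip_dual, of S c]
    by (rule mult_left_mono)
  finally show ?thesis
    by (simp add: mult.commute)
qed

lemma linearization_zero:
  assumes "\<exists>a::'a. a \<noteq> 0" and "is_linearization (f :: 'a::real_normed_vector \<Rightarrow> 'b::real_normed_vector) T"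
  shows "T (\<lambda>g. 0) = 0"
proof -
  have zero: "(\<lambda>g::'a \<Rightarrow> real. 0) \<in> free_space TYPE('a)"
    using delta_comb_free_space[OF assms(1), of "{}" "\<lambda>_. 0"] by (simp add: delta_comb_def)
  have "\<forall>\<phi>\<in>free_space TYPE('a). \<forall>c. T (\<lambda>g. c * \<phi> g) = c *\<^sub>R T \<phi>"
    using assms(2) unfolding is_linearization_def by blast
  from this[rule_format, OF zero, of 0] show ?thesis
    by simp
qed

lemma linearization_delta_comb:
  assumes nontrivial: "\<exists>a::'a. a \<noteq> 0"
    and T: "is_linearization (f :: 'a::real_normed_vector \<Rightarrow> 'b::real_normed_vector) T"
    and "finite S"
  shows "T (delta_comb S c) = (\<Sum>x\<in>S. c x *\<^sub>R f x)"
  using \<open>finite S\<close>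
proof (induction S rule: finite_induct)
  case empty
  then show ?case
    using linearization_zero[OF nontrivial T] by (simp add: delta_comb_def)
next
  case (insert a S)
  have add: "\<forall>\<phi>\<in>free_space TYPE('a). \<forall>\<psi>\<in>free_space TYPE('a). T (\<lambda>g. \<phi> g + \<psi> g) = T \<phi> + T \<psi>"
    and scale: "\<forall>\<phi>\<in>free_space TYPE('a). \<forall>r. T (\<lambda>g. r * \<phi> g) = r *\<^sub>R T \<phi>"
    and delta: "\<forall>x. T (\<delta> x) = f x"
    using T unfolding is_linearization_def by blast+
  have "\<delta> a = delta_comb {a} (\<lambda>_. 1)"
    by (simp add: delta_comb_def)
  then have "\<delta> a \<in> free_space TYPE('a)"
    using delta_comb_free_space[OF nontrivial] by simp
  then have "T (\<lambda>g. c a * \<delta> a g) = c a *\<^sub>R f a"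
    using scale delta by simp
  moreover have "(\<lambda>g. c a * \<delta> a g) \<in> free_space TYPE('a)"
    using delta_comb_free_space[OF nontrivial, of "{a}" c] by (simp add: delta_comb_def)
  moreover have "delta_comb (insert a S) c = (\<lambda>g. c a * \<delta> a g + delta_comb S c g)"
    using insert.hyps by (simp add: delta_comb_def)
  ultimately show ?case
    using add delta_comb_free_space[OF nontrivial insert.hyps(1)] insert by simp
qed

lemma linearization_bound:
  assumes nontrivial: "\<exists>a::'a. a \<noteq> 0"
    and "is_linearization (f :: 'a::real_normed_vector \<Rightarrow> 'b::real_normed_vector) T"
  obtains C where "0 \<le> C" "\<forall>\<phi>\<in>free_space TYPE('a). norm (T \<phi>) \<le> C * dnorm \<phi>"
proof -
  obtain C where C: "\<forall>\<phi>\<in>free_space TYPE('a). norm (T \<phi>) \<le> C * dnorm \<phi>"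
    using assms(2) unfolding is_linearization_def by blast
  have "norm (T \<phi>) \<le> max C 0 * dnorm \<phi>" if "\<phi> \<in> free_space TYPE('a)" for \<phi>
  proof -
    have "0 \<le> dnorm \<phi>"
      using dnorm_nonneg[OF nontrivial] that unfolding free_space_def by blast
    then have "C * dnorm \<phi> \<le> max C 0 * dnorm \<phi>"
      by (intro mult_right_mono) auto
    then show ?thesis
      using C that by fastforce
  qed
  then show ?thesis
    using that[of "max C 0"] by simp
qed

lemma norm_le_opnorm_free:
  assumes nontrivial: "\<exists>a::'a. a \<noteq> 0"
    and T: "is_linearization (f :: 'a::real_normed_vector \<Rightarrow> 'b::real_normed_vector) T"
    and "\<phi> \<in> free_space TYPE('a)" "dnorm \<phi> \<le> 1"
  shows "norm (T \<phi>) \<le> opnorm_free T"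
proof -
  obtain C where C: "0 \<le> C" "\<forall>\<phi>\<in>free_space TYPE('a). norm (T \<phi>) \<le> C * dnorm \<phi>"
    using linearization_bound[OF nontrivial T] by blast
  have "norm (T \<phi>) \<le> C" if "\<phi> \<in> free_space TYPE('a)" "dnorm \<phi> \<le> 1" for \<phi>
    using C(2) that(1) mult_left_mono[OF that(2) C(1)] by fastforce
  then have "bdd_above {norm (T \<phi>) | \<phi>. \<phi> \<in> free_space TYPE('a) \<and> dnorm \<phi> \<le> 1}"
    unfolding bdd_above_def by blast
  then show ?thesis
    unfolding opnorm_free_def using assms(3,4) by (intro cSup_upper) blast+
qed

lemma lipnorm_le_opnorm_free:
  assumes nontrivial: "\<exists>a::'a. a \<noteq> 0"
    and T: "is_linearization (f :: 'a::real_normed_vector \<Rightarrow> 'b::real_normed_vector) T"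
  shows "lipnorm f \<le> opnorm_free T"
proof (rule lipnorm_le[OF nontrivial])
  fix a b :: 'a
  assume "a \<noteq> b"
  define n where "n = norm (a - b)"
  have n: "n > 0"
    using \<open>a \<noteq> b\<close> by (simp add: n_def)
  define m where "m = delta_comb {a, b} (\<lambda>x. if x = a then 1 / n else - (1 / n))"
  have "T m = (1 / n) *\<^sub>R (f a - f b)"
    unfolding m_def using linearization_delta_comb[OF nontrivial T] \<open>a \<noteq> b\<close>
    by (simp add: algebra_simps)
  moreover have "dnorm m \<le> 1"
  proof (rule dnorm_le[OF nontrivial])
    fix g :: "'a \<Rightarrow> real"
    assume g: "g \<in> Lip0" "lipnorm g \<le> 1"
    have "\<bar>g a - g b\<bar> \<le> n"
      using norm_diff_le_lipnorm[OF g(1), of a b] mult_right_mono[OF g(2) norm_ge_zero[of "a - b"]]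
      unfolding n_def by simp
    moreover have "m g = (g a - g b) / n"
      unfolding m_def delta_comb_def evalf_def using g(1) \<open>a \<noteq> b\<close> by (simp add: diff_divide_distrib)
    ultimately show "\<bar>m g\<bar> \<le> 1"
      using n by (simp add: abs_divide)
  qed
  moreover have "m \<in> free_space TYPE('a)"
    unfolding m_def by (rule delta_comb_free_space[OF nontrivial]) simp
  ultimately have "norm (f a - f b) / n \<le> opnorm_free T"
    using norm_le_opnorm_free[OF nontrivial T] n by fastforce
  then show "norm (f a - f b) \<le> opnorm_free T * norm (a - b)"
    using n by (simp add: n_def divide_le_eq)
qed

section \<open>Norm-attaining linearizations\<close>

definition diff_quot :: "('a::real_normed_vector \<Rightarrow> 'b::real_normed_vector) \<Rightarrow> 'a \<Rightarrow> 'a \<Rightarrow> 'b" where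
  "diff_quot f x y = (1 / norm (x - y)) *\<^sub>R (f x - f y)"

lemma norm_diff_quot_le_lipnorm:
  assumes "f \<in> Lip0" "x \<noteq> y"
  shows "norm (diff_quot f x y) \<le> lipnorm f"
  using norm_diff_le_lipnorm[OF assms(1), of x y] assms(2) by (simp add: diff_quot_def divide_le_eq)

lemma norming_pairing_approximation:
  fixes f :: "'a::real_normed_vector \<Rightarrow> 'b::real_normed_vector"
  assumes nontrivial: "\<exists>a::'a. a \<noteq> 0" and T: "is_linearization f T"
    and C: "0 \<le> C" "\<forall>\<phi>\<in>free_space TYPE('a). norm (T \<phi>) \<le> C * dnorm \<phi>"
    and w: "w \<in> free_space TYPE('a)" and e: "e > 0"
  obtains S \<phi> c where "finite S" "linear \<phi>" "\<And>a. a \<in> span (insert (T w) (f ` S)) \<Longrightarrow> \<phi> a \<le> norm a"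
    "\<phi> (T w) = norm (T w)" "norm (T w) - C * e \<le> (\<Sum>x\<in>S. c x * \<phi> (f x))"
    "dnorm (delta_comb S c) \<le> dnorm w + e"
proof -
  obtain S c where S: "finite S" and close: "dnorm (\<lambda>g. w g - delta_comb S c g) < e"
    using w e unfolding free_space_def delta_span_eq by blast
  define D where "D = (\<lambda>g. w g - delta_comb S c g)"
  have D: "D \<in> free_space TYPE('a)"
    unfolding D_def using free_space_diff_delta_comb[OF nontrivial w S] .
  have "T (\<lambda>g. D g + delta_comb S c g) = T D + T (delta_comb S c)"
    using T D delta_comb_free_space[OF nontrivial S] unfolding is_linearization_def by blast
  then have Tw: "T w - (\<Sum>x\<in>S. c x *\<^sub>R f x) = T D"
    by (simp add: D_def linearization_delta_comb[OF nontrivial T S])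
  obtain \<phi> :: "'b \<Rightarrow> real" where \<phi>: "linear \<phi>" "\<And>a. a \<in> span (insert (T w) (f ` S)) \<Longrightarrow> \<phi> a \<le> norm a"
    "\<phi> (T w) = norm (T w)"
    using norming_functional_on_finite_span[of "f ` S" "T w"] S by blast
  have "norm (T D) \<le> C * e"
  proof -
    have "norm (T D) \<le> C * dnorm D"
      using C(2) D by blast
    also have "\<dots> \<le> C * e"
      using close C(1) by (simp add: D_def mult_left_mono)
    finally show ?thesis .
  qed
  then have "norm (T w) - C * e \<le> norm (T w) - norm (T w - (\<Sum>x\<in>S. c x *\<^sub>R f x))"
    by (simp add: Tw)
  also have "\<dots> \<le> (\<Sum>x\<in>S. c x * \<phi> (f x))"
    using \<phi> by (rule norming_functional_sum_ge)
  finally have pairing: "norm (T w) - C * e \<le> (\<Sum>x\<in>S. c x * \<phi> (f x))" .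
  have "delta_comb S c = (\<lambda>g. w g - D g)"
    by (simp add: D_def)
  then have "dnorm (delta_comb S c) \<le> dnorm w + dnorm D"
    using dnorm_diff_le[OF nontrivial] w D unfolding free_space_def by simp
  then have "dnorm (delta_comb S c) \<le> dnorm w + e"
    using close by (simp add: D_def)
  with S \<phi> pairing show ?thesis
    using that by blast
qed

lemma lipschitz_on_norming_functional_comp:
  fixes f :: "'a::real_normed_vector \<Rightarrow> 'b::real_normed_vector" and \<phi> :: "'b \<Rightarrow> real"
  assumes \<phi>: "linear \<phi>" "\<And>a. a \<in> span (insert y (f ` S)) \<Longrightarrow> \<phi> a \<le> norm a" "\<phi> y = norm y"
    and f0: "f 0 = 0" and M: "0 \<le> M"
    and quot: "\<And>x x'. x \<in> insert 0 S \<Longrightarrow> x' \<in> insert 0 S \<Longrightarrow> x \<noteq> x'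
      \<Longrightarrow> norm (diff_quot f x x' + y) \<le> norm y + M"
  shows "M-lipschitz_on (insert 0 S) (\<lambda>x. \<phi> (f x))"
proof -
  have f_span: "f x \<in> span (insert y (f ` S))" if "x \<in> insert 0 S" for x
    using that f0 by (auto intro: span_base simp: span_zero)
  have one_sided: "\<phi> (f x) - \<phi> (f x') \<le> M * dist x x'"
    if x: "x \<in> insert 0 S" and x': "x' \<in> insert 0 S" for x x'
  proof (cases "x = x'")
    case False
    define n where "n = norm (x - x')"
    have n: "n > 0"
      using False by (simp add: n_def)
    have q_span: "diff_quot f x x' \<in> span (insert y (f ` S))"
      unfolding diff_quot_def using f_span[OF x] f_span[OF x'] by (intro span_scale span_diff)
    have "\<phi> (diff_quot f x x') + norm y = \<phi> (diff_quot f x x' + y)"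
      using \<phi>(3) by (simp add: linear_add[OF \<phi>(1)])
    also have "\<dots> \<le> norm (diff_quot f x x' + y)"
      using \<phi>(2) q_span by (simp add: span_add span_base)
    also have "\<dots> \<le> norm y + M"
      using quot[OF x x' False] .
    finally have "\<phi> (diff_quot f x x') \<le> M"
      by simp
    moreover have "\<phi> (f x) - \<phi> (f x') = n * \<phi> (diff_quot f x x')"
      using n by (simp add: diff_quot_def n_def linear_scale[OF \<phi>(1)] linear_diff[OF \<phi>(1)])
    ultimately show ?thesis
      using n by (simp add: dist_norm n_def mult.commute mult_left_mono)
  qed simp
  show ?thesis
  proof (rule lipschitz_onI[OF _ M])
    fix x x'
    assume "x \<in> insert 0 S" "x' \<in> insert 0 S"
    then show "dist (\<phi> (f x)) (\<phi> (f x')) \<le> M * dist x x'"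
      using one_sided[of x x'] one_sided[of x' x] by (simp add: dist_real_def dist_commute abs_le_iff)
  qed
qed

lemma norm_linearization_le_of_quotients:
  fixes f :: "'a::real_normed_vector \<Rightarrow> 'b::real_normed_vector"
  assumes nontrivial: "\<exists>a::'a. a \<noteq> 0" and T: "is_linearization f T"
    and f0: "f 0 = 0" and w: "w \<in> free_space TYPE('a)" and M: "0 \<le> M"
    and quot: "\<And>x x'. x \<noteq> x' \<Longrightarrow> norm (diff_quot f x x' + T w) \<le> norm (T w) + M"
  shows "norm (T w) \<le> M * dnorm w"
proof (rule field_le_epsilon)
  fix e :: real
  assume e: "0 < e"
  obtain C where C: "0 \<le> C" "\<forall>\<phi>\<in>free_space TYPE('a). norm (T \<phi>) \<le> C * dnorm \<phi>"
    using linearization_bound[OF nontrivial T] by blast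
  define e' where "e' = e / (M + C + 1)"
  have e': "e' > 0" "(M + C + 1) * e' = e"
    using e M C(1) by (simp_all add: e'_def)
  obtain S \<phi> c where S: "finite S" and \<phi>: "linear \<phi>"
    "\<And>a. a \<in> span (insert (T w) (f ` S)) \<Longrightarrow> \<phi> a \<le> norm a" "\<phi> (T w) = norm (T w)"
    and pairing: "norm (T w) - C * e' \<le> (\<Sum>x\<in>S. c x * \<phi> (f x))"
    and dn: "dnorm (delta_comb S c) \<le> dnorm w + e'"
    using norming_pairing_approximation[OF nontrivial T C w e'(1)] by blast
  have "M-lipschitz_on (insert 0 S) (\<lambda>x. \<phi> (f x))"
    using \<phi> f0 M quot by (rule lipschitz_on_norming_functional_comp)
  then have "(\<Sum>x\<in>S. c x * \<phi> (f x)) \<le> M * dnorm (delta_comb S c)"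
    using delta_comb_le_lipschitz[OF nontrivial S] f0 linear_0[OF \<phi>(1)] by simp
  also have "\<dots> \<le> M * (dnorm w + e')"
    using dn M by (rule mult_left_mono)
  finally have "norm (T w) \<le> M * dnorm w + (M + C) * e'"
    using pairing by (simp add: algebra_simps)
  also have "\<dots> \<le> M * dnorm w + e"
    using e' by (simp add: algebra_simps)
  finally show "norm (T w) \<le> M * dnorm w + e" .
qed

lemma norm_linearization_le_lipnorm:
  fixes f :: "'a::real_normed_vector \<Rightarrow> 'b::real_normed_vector"
  assumes nontrivial: "\<exists>a::'a. a \<noteq> 0" and f: "f \<in> Lip0" and T: "is_linearization f T"
    and w: "w \<in> free_space TYPE('a)"
  shows "norm (T w) \<le> lipnorm f * dnorm w"
proof (rule norm_linearization_le_of_quotients[OF nontrivial T _ w])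
  show "f 0 = 0"
    using f by (simp add: Lip0_def)
  show "0 \<le> lipnorm f"
    using lipnorm_nonneg[OF nontrivial f] .
  fix x x' :: 'a
  assume "x \<noteq> x'"
  then show "norm (diff_quot f x x' + T w) \<le> norm (T w) + lipnorm f"
    using norm_triangle_ineq[of "diff_quot f x x'" "T w"] norm_diff_quot_le_lipnorm[OF f] by fastforce
qed

lemma uniformly_convex_sphere_sum_le:
  assumes uc: "uniformly_convex TYPE('b::real_normed_vector)" and L: "L > 0" and \<epsilon>: "\<epsilon> > 0"
  obtains \<eta> where "\<eta> > 0"
    "\<And>x y::'b. norm x = L \<Longrightarrow> norm y = L \<Longrightarrow> \<epsilon> \<le> norm (x - y) \<Longrightarrow> norm (x + y) \<le> 2 * L - 2 * L * \<eta>"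
proof -
  obtain \<eta> where \<eta>: "\<eta> > 0" and H: "\<forall>x y::'b. norm x = 1 \<and> norm y = 1 \<and> norm (x - y) \<ge> \<epsilon> / L
      \<longrightarrow> norm ((1 / 2) *\<^sub>R (x + y)) \<le> 1 - \<eta>"
    using uc L \<epsilon> unfolding uniformly_convex_def by (metis divide_pos_pos)
  have "norm (x + y) \<le> 2 * L - 2 * L * \<eta>"
    if x: "norm x = L" and y: "norm y = L" and far: "\<epsilon> \<le> norm (x - y)" for x y :: 'b
  proof -
    have "\<epsilon> / L \<le> norm (x - y) / L"
      using divide_right_mono[OF far less_imp_le[OF L]] .
    also have "\<dots> = norm ((1 / L) *\<^sub>R x - (1 / L) *\<^sub>R y)"
      using L by (simp add: scaleR_diff_right[symmetric])
    finally have far_unit: "\<epsilon> / L \<le> norm ((1 / L) *\<^sub>R x - (1 / L) *\<^sub>R y)" .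
    have unit: "norm ((1 / L) *\<^sub>R x) = 1" "norm ((1 / L) *\<^sub>R y) = 1"
      using x y L by simp_all
    have "norm ((1 / 2) *\<^sub>R ((1 / L) *\<^sub>R x + (1 / L) *\<^sub>R y)) \<le> 1 - \<eta>"
      using H unit far_unit by blast
    moreover have "(1 / 2) *\<^sub>R ((1 / L) *\<^sub>R x + (1 / L) *\<^sub>R y) = (1 / (2 * L)) *\<^sub>R (x + y)"
      by (simp add: scaleR_add_right)
    ultimately have "norm (x + y) / (2 * L) \<le> 1 - \<eta>"
      using L by simp
    then have "norm (x + y) \<le> (1 - \<eta>) * (2 * L)"
      using L by (simp add: divide_le_eq)
    then show ?thesis
      by (simp add: algebra_simps)
  qed
  with \<eta> show ?thesis
    using that by blast
qed

lemma uniformly_convex_far_sum_le: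
  assumes uc: "uniformly_convex TYPE('b::real_normed_vector)" and L: "L > 0" and \<epsilon>: "\<epsilon> > 0"
  obtains \<gamma> where "\<gamma> > 0" "\<gamma> \<le> L"
    "\<And>d y::'b. norm y = L \<Longrightarrow> norm d \<le> L \<Longrightarrow> \<epsilon> \<le> norm (d - y) \<Longrightarrow> norm (d + y) \<le> 2 * L - \<gamma>"
proof -
  obtain \<eta> where \<eta>: "\<eta> > 0" and sphere: "\<And>x y::'b. norm x = L \<Longrightarrow> norm y = L
      \<Longrightarrow> \<epsilon> / 2 \<le> norm (x - y) \<Longrightarrow> norm (x + y) \<le> 2 * L - 2 * L * \<eta>"
    using uniformly_convex_sphere_sum_le[OF uc L, of "\<epsilon> / 2"] \<epsilon> by auto
  define \<gamma> where "\<gamma> = min (\<epsilon> / 2) (min (L * \<eta>) L)"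
  have \<gamma>: "\<gamma> > 0" "\<gamma> \<le> L" "\<gamma> \<le> L * \<eta>" "\<gamma> \<le> \<epsilon> / 2"
    using \<epsilon> L \<eta> by (simp_all add: \<gamma>_def)
  have "norm (d + y) \<le> 2 * L - \<gamma>" if y: "norm y = L" and d: "norm d \<le> L" and far: "\<epsilon> \<le> norm (d - y)"
    for d y :: 'b
  proof (cases "norm d \<le> L - \<gamma>")
    case True
    then show ?thesis
      using norm_triangle_ineq[of d y] y by linarith
  next
    case False
    then have "norm d > 0"
      using \<gamma> by linarith
    define d' where "d' = (L / norm d) *\<^sub>R d"
    have d': "norm d' = L"
      unfolding d'_def using \<open>norm d > 0\<close> L by simp
    have "d' - d = ((L - norm d) / norm d) *\<^sub>R d"
      unfolding d'_def using \<open>norm d > 0\<close> by (simp add: algebra_simps diff_divide_distrib)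
    then have dd': "norm (d - d') = L - norm d"
      using \<open>norm d > 0\<close> d by (simp add: norm_minus_commute)
    have "norm (d - y) \<le> norm (d - d') + norm (d' - y)"
      using norm_triangle_ineq[of "d - d'" "d' - y"] by simp
    then have "\<epsilon> / 2 \<le> norm (d' - y)"
      using dd' far \<gamma> False by linarith
    then have "norm (d' + y) \<le> 2 * L - 2 * L * \<eta>"
      using sphere d' y by blast
    moreover have "norm (d + y) \<le> norm (d' + y) + norm (d - d')"
      using norm_triangle_ineq[of "d' + y" "d - d'"] by (simp add: add.commute)
    ultimately show ?thesis
      using dd' \<gamma> False by linarith
  qed
  with \<gamma> show ?thesis
    using that by blast
qed

lemma norm_attaining_value_in_closure:
  fixes f :: "'a::real_normed_vector \<Rightarrow> 'b::real_normed_vector"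
  assumes uc: "uniformly_convex TYPE('b)" and nontrivial: "\<exists>a::'a. a \<noteq> 0"
    and f: "f \<in> Lip0" and T: "is_linearization f T"
    and w: "w \<in> free_space TYPE('a)" "dnorm w = 1" and norm_Tw: "norm (T w) = lipnorm f"
  shows "T w \<in> closure {diff_quot f x y | x y. x \<noteq> y}"
  unfolding closure_approachable
proof (intro allI impI)
  fix \<epsilon> :: real
  assume \<epsilon>: "\<epsilon> > 0"
  show "\<exists>q\<in>{diff_quot f x y | x y. x \<noteq> y}. dist q (T w) < \<epsilon>"
  proof (rule ccontr)
    assume "\<not> ?thesis"
    then have far: "\<epsilon> \<le> norm (diff_quot f x x' - T w)" if "x \<noteq> x'" for x x'
      using that by (auto simp: dist_norm not_less)
    have "lipnorm f > 0"
    proof (rule ccontr)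
      assume "\<not> lipnorm f > 0"
      moreover obtain a :: 'a where "a \<noteq> 0"
        using nontrivial by blast
      ultimately have "norm (diff_quot f a 0) \<le> 0" "T w = 0"
        using norm_diff_quot_le_lipnorm[OF f] norm_Tw lipnorm_nonneg[OF nontrivial f] by fastforce+
      then show False
        using far[OF \<open>a \<noteq> 0\<close>] \<epsilon> by simp
    qed
    then obtain \<gamma> where \<gamma>: "\<gamma> > 0" "\<gamma> \<le> lipnorm f" and sum_le: "\<And>d y::'b. norm y = lipnorm f
      \<Longrightarrow> norm d \<le> lipnorm f \<Longrightarrow> \<epsilon> \<le> norm (d - y) \<Longrightarrow> norm (d + y) \<le> 2 * lipnorm f - \<gamma>"
      using uniformly_convex_far_sum_le[OF uc _ \<epsilon>] by blast
    have "norm (T w) \<le> (lipnorm f - \<gamma>) * dnorm w"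
    proof (rule norm_linearization_le_of_quotients[OF nontrivial T _ w(1)])
      show "f 0 = 0"
        using f by (simp add: Lip0_def)
      show "0 \<le> lipnorm f - \<gamma>"
        using \<gamma> by simp
      fix x x' :: 'a
      assume "x \<noteq> x'"
      then show "norm (diff_quot f x x' + T w) \<le> norm (T w) + (lipnorm f - \<gamma>)"
        using sum_le[OF norm_Tw norm_diff_quot_le_lipnorm[OF f] far] norm_Tw by simp
    qed
    then show False
      using \<gamma> norm_Tw w(2) by simp
  qed
qed

lemma classA_if_in_closure:
  assumes "f \<in> Lip0" "z \<in> closure {diff_quot f x y | x y. x \<noteq> y}" "norm z = lipnorm f"
  shows "f \<in> classA"
proof -
  obtain q where q: "\<forall>n. q n \<in> {diff_quot f x y | x y. x \<noteq> y}" "q \<longlonglongrightarrow> z"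
    using assms(2) unfolding closure_sequential by blast
  have "\<exists>p. fst p \<noteq> snd p \<and> q n = diff_quot f (fst p) (snd p)" for n
  proof -
    obtain x y where "x \<noteq> y" "q n = diff_quot f x y"
      using q(1) by blast
    then show ?thesis
      by (intro exI[of _ "(x, y)"]) simp
  qed
  then have "\<exists>p. \<forall>n. fst (p n) \<noteq> snd (p n) \<and> q n = diff_quot f (fst (p n)) (snd (p n))"
    by (intro choice allI)
  then obtain p where p: "\<And>n. fst (p n) \<noteq> snd (p n)" "\<And>n. q n = diff_quot f (fst (p n)) (snd (p n))"
    by blast
  have "q = (\<lambda>n. (1 / norm (fst (p n) - snd (p n))) *\<^sub>R (f (fst (p n)) - f (snd (p n))))"
    using p(2) by (simp add: fun_eq_iff diff_quot_def)
  with q(2) have "(\<lambda>n. (1 / norm (fst (p n) - snd (p n))) *\<^sub>R (f (fst (p n)) - f (snd (p n)))) \<longlonglongrightarrow> z"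
    by simp
  with assms(1,3) p(1) show ?thesis
    unfolding classA_def by (intro CollectI conjI exI[of _ z] exI[of _ "\<lambda>n. fst (p n)"] exI[of _ "\<lambda>n. snd (p n)"]) auto
qed

text \<open>Whatever the value of \<open>Sup {}\<close>, it rules out a norming element on the space \<open>{0}\<close>.\<close>

lemma dnorm_ne_one_if_trivial:
  assumes trivial: "\<And>x::'a. x = 0" and w: "w \<in> free_space TYPE('a::real_normed_vector)"
  shows "dnorm w \<noteq> 1"
proof
  assume dw: "dnorm w = 1"
  have "x = y" for x y :: 'a
    using trivial[of x] trivial[of y] by simp
  then have no_quotients: "{norm (g x - g y) / norm (x - y) | x y. x \<noteq> y} = {}" for g :: "'a \<Rightarrow> real"
    by blast
  have lipnorm_eq: "lipnorm g = Sup {}" for g :: "'a \<Rightarrow> real"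
    unfolding lipnorm_def no_quotients ..
  show False
  proof (cases "Sup {} \<le> (1::real)")
    case True
    have "g = (\<lambda>x. 0)" if "g \<in> Lip0" for g :: "'a \<Rightarrow> real"
    proof
      fix x
      show "g x = 0"
        using that trivial[of x] by (simp add: Lip0_def)
    qed
    then have "{\<bar>w g\<bar> | g. g \<in> Lip0 \<and> lipnorm g \<le> 1} = {\<bar>w (\<lambda>x. 0)\<bar>}"
      using True lipnorm_eq Lip0_zero[where 'b=real] by auto
    moreover have "w (\<lambda>x. 0) = 0"
      using w lip_dual_zero unfolding free_space_def by blast
    ultimately have "dnorm w = 0"
      unfolding dnorm_def by simp
    with dw show False
      by simp
  next
    case False
    then have "dnorm \<phi> = Sup {}" for \<phi> :: "('a \<Rightarrow> real) \<Rightarrow> real"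
      unfolding dnorm_def using lipnorm_eq by simp
    moreover obtain \<psi> where "dnorm (\<lambda>g. w g - \<psi> g) < 1"
      using w zero_less_one unfolding free_space_def by blast
    ultimately show False
      using False by simp
  qed
qed

theorem proposition3p7:
  fixes f :: "'a::banach \<Rightarrow> 'b::banach"
    and T :: "(('a \<Rightarrow> real) \<Rightarrow> real) \<Rightarrow> 'b"
  assumes "uniformly_convex TYPE('b)"
    and "f \<in> Lip0"
    and "is_linearization f T"
    and "attains_norm_free T"
  shows "f \<in> classA"
proof -
  obtain w where w: "w \<in> free_space TYPE('a)" "dnorm w = 1" "norm (T w) = opnorm_free T"
    using assms(4) unfolding attains_norm_free_def by blast
  have nontrivial: "\<exists>a::'a. a \<noteq> 0"
    using dnorm_ne_one_if_trivial w(1,2) by blast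
  have "norm (T w) \<le> lipnorm f"
    using norm_linearization_le_lipnorm[OF nontrivial assms(2,3) w(1)] w(2) by simp
  moreover have "lipnorm f \<le> norm (T w)"
    using lipnorm_le_opnorm_free[OF nontrivial assms(3)] w(3) by simp
  ultimately have norm_Tw: "norm (T w) = lipnorm f"
    by simp
  then have "T w \<in> closure {diff_quot f x y | x y. x \<noteq> y}"
    using norm_attaining_value_in_closure[OF assms(1) nontrivial assms(2,3) w(1,2)] by simp
  then show ?thesis
    using classA_if_in_closure[OF assms(2)] norm_Tw by blast
qed

end
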